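(* Consider a Functional DCOP (as defined in the context) in which every utility function is binary and differentiable. Suppose discrete DPOP is applied to it after discretizing the domains so that, for every utility function $f(x_i, x_{i_1}, \dots, x_{i_k})$ handled by an agent $x_i$ with separator agents $x_{i_1},\dots,x_{i_k}$, the domain of $f$ is partitioned into hypercubes of size $m$ (i.e., the distance between two neighbouring discrete points of the same variable is $m$). Assume that $|\nabla f(v)| \le \delta$ for every utility function $f$ of the problem and every point $v$ of its domain, where for $v=(v_i,v_{i_1},\dots,v_{i_k})$, $$|\nabla f(v)| = \left|\frac{\partial f}{\partial x_i}(v)\right| + \left|\frac{\partial f}{\partial x_{i_1}}(v)\right| + \dots + \left|\frac{\partial f}{\partial x_{i_k}}(v)\right|.$$ Then the error bound of discrete DPOP is $|\mathbf{F}|\, m\, \delta$; that is, the utility $\mathbf{F}$ of the complete solution returned by discrete DPOP is at least $\max_{\mathbf{x}} \mathbf{F}(\mathbf{x}) - |\mathbf{F}|\, m\,\delta$, where $|\mathbf{F}|$ is the number of utility functions.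
   Context: A Functional DCOP (F-DCOP) is a tuple $\langle \mathbf{A}, \mathbf{X}, \mathbf{D}, \mathbf{F}, \alpha\rangle$: $\mathbf{A}$ is a finite set of agents; $\mathbf{X}=\{x_1,\dots,x_n\}$ is a set of continuous decision variables; $\mathbf{D}=\{D_x\}$ where each $x$ takes values in an interval $D_x=[LB_x,UB_x]$; $\mathbf{F}=\{f_1,\dots,f_m\}$ is a set of utility functions, each $f$ defined on $\prod_{x\in \mathrm{scope}(f)} D_x$ with values in $\mathbb{R}\cup\{-\infty\}$; $\alpha:\mathbf{X}\to\mathbf{A}$ maps variables to agents. Each agent controls exactly one variable (agents and variables are identified) and every utility function is binary. The utility of a complete assignment $\mathbf{x}$ is $\mathbf{F}(\mathbf{x})=\sum_{f\in\mathbf{F}} f(\mathbf{x})$, and the goal is to find $\mathbf{x}^*=\arg\max_{\mathbf{x}}\mathbf{F}(\mathbf{x})$. The constraint graph has a node per variable and an edge between two variables sharing a utility function. A pseudo-tree is a rooted spanning tree of the constraint graph (tree edges) such that the two variables of every utility function lie on the same root-to-leaf branch; remaining edges are backedges. The separator of $x_i$ consists of the ancestors of $x_i$ that are connected to $x_i$ or to one of its descendants. Discrete DPOP: after building a pseudo-tree, each variable's domain is replaced by a finite set of discrete points. In the UTIL phase, starting from the leaves, each agent adds the utilities of its functions with its separator and the UTIL tables received from its children, for every combination of discrete values of itself and its separator, then projects out its own variable by maximizing over it, and sends the resulting table (a function of its separator's values) to its parent. In the VALUE phase, starting from the root, each agent picks its best value given the values of its separator and sends the values down to its children. *)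

theory Defs
  imports "HOL-Analysis.Analysis"
begin

text \<open>Variables (= agents) range over a finite type 'v, utility
  functions are indexed by a finite type 'f. Function k has scope (sa k, sb k) and
  utility util_fn k applied to the pair of values (value of sa k, value of sb k).\<close>
record ('v, 'f) fdcop =
  lb :: "'v \<Rightarrow> real"
  ub :: "'v \<Rightarrow> real"
  sa :: "'f \<Rightarrow> 'v"
  sb :: "'f \<Rightarrow> 'v"
  util_fn :: "'f \<Rightarrow> real \<times> real \<Rightarrow> real"

definition total_utility :: "('v, 'f::finite) fdcop \<Rightarrow> ('v \<Rightarrow> real) \<Rightarrow> real" where
  "total_utility P x = (\<Sum>k\<in>UNIV. util_fn P k (x (sa P k), x (sb P k)))"

definition is_assignment :: "('v, 'f) fdcop \<Rightarrow> ('v \<Rightarrow> real) \<Rightarrow> bool" where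
  "is_assignment P x \<longleftrightarrow> (\<forall>v. lb P v \<le> x v \<and> x v \<le> ub P v)"

definition fbox :: "('v, 'f) fdcop \<Rightarrow> 'f \<Rightarrow> (real \<times> real) set" where
  "fbox P k = {lb P (sa P k)..ub P (sa P k)} \<times> {lb P (sb P k)..ub P (sb P k)}"

definition tree_rel :: "('v \<Rightarrow> 'v option) \<Rightarrow> ('v \<times> 'v) set" where
  "tree_rel par = {(p, c). par c = Some p}"

definition anc :: "('v \<Rightarrow> 'v option) \<Rightarrow> 'v \<Rightarrow> 'v \<Rightarrow> bool" where
  "anc par a b \<longleftrightarrow> (a, b) \<in> (tree_rel par)\<^sup>+"

definition is_pseudo_tree :: "('v, 'f) fdcop \<Rightarrow> ('v \<Rightarrow> 'v option) \<Rightarrow> 'v \<Rightarrow> bool" where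
  "is_pseudo_tree P par r \<longleftrightarrow>
     par r = None \<and>
     (\<forall>v. v \<noteq> r \<longrightarrow> par v \<noteq> None \<and> anc par r v) \<and>
     (\<forall>v. \<not> anc par v v) \<and>
     (\<forall>c p. par c = Some p \<longrightarrow> (\<exists>k. {sa P k, sb P k} = {c, p})) \<and>
     (\<forall>k. sa P k \<noteq> sb P k \<and> (anc par (sa P k) (sb P k) \<or> anc par (sb P k) (sa P k)))"

definition children :: "('v \<Rightarrow> 'v option) \<Rightarrow> 'v \<Rightarrow> 'v set" where
  "children par x = {c. par c = Some x}"

text \<open>The agent handling function k: the lower of its two variables in the pseudo-tree
  (the one whose separator contains the other).\<close>
definition handler :: "('v, 'f) fdcop \<Rightarrow> ('v \<Rightarrow> 'v option) \<Rightarrow> 'f \<Rightarrow> 'v" where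
  "handler P par k = (if anc par (sa P k) (sb P k) then sb P k else sa P k)"

definition grid :: "('v, 'f) fdcop \<Rightarrow> real \<Rightarrow> 'v \<Rightarrow> real set" where
  "grid P m v = {lb P v + real n * m | n::nat. lb P v + real n * m \<le> ub P v}"

definition local_util :: "('v, 'f::finite) fdcop \<Rightarrow> ('v \<Rightarrow> 'v option) \<Rightarrow> 'v \<Rightarrow> ('v \<Rightarrow> real) \<Rightarrow> real" where
  "local_util P par x \<sigma> = (\<Sum>k\<in>{k. handler P par k = x}. util_fn P k (\<sigma> (sa P k), \<sigma> (sb P k)))"

text \<open>UTIL messages (with a fuel argument bounding the recursion depth). The
  message of x is a function of the assignment \<sigma>, of which only the separator
  values matter.\<close>
primrec utilmsg :: "('v, 'f::finite) fdcop \<Rightarrow> ('v \<Rightarrow> 'v option) \<Rightarrow> real \<Rightarrow> nat \<Rightarrow> 'v \<Rightarrow> ('v \<Rightarrow> real) \<Rightarrow> real" where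
  "utilmsg P par m 0 x \<sigma> = 0"
| "utilmsg P par m (Suc n) x \<sigma> =
     Max ((\<lambda>d. local_util P par x (\<sigma>(x := d))
              + (\<Sum>c\<in>children par x. utilmsg P par m n c (\<sigma>(x := d)))) ` grid P m x)"

text \<open>The quantity agent x maximizes over its own discrete value in the VALUE phase.\<close>
definition dpop_body :: "('v::finite, 'f::finite) fdcop \<Rightarrow> ('v \<Rightarrow> 'v option) \<Rightarrow> real \<Rightarrow> 'v \<Rightarrow> ('v \<Rightarrow> real) \<Rightarrow> real" where
  "dpop_body P par m x \<sigma> = local_util P par x \<sigma>
      + (\<Sum>c\<in>children par x. utilmsg P par m CARD('v) c \<sigma>)"

text \<open>y is a possible output of discrete DPOP: every agent picks a discrete value
  that is best given the values chosen by its ancestors.\<close>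
definition dpop_output :: "('v::finite, 'f::finite) fdcop \<Rightarrow> ('v \<Rightarrow> 'v option) \<Rightarrow> real \<Rightarrow> ('v \<Rightarrow> real) \<Rightarrow> bool" where
  "dpop_output P par m y \<longleftrightarrow>
     (\<forall>v. y v \<in> grid P m v) \<and>
     (\<forall>v. \<forall>d\<in>grid P m v. dpop_body P par m v (y(v := d)) \<le> dpop_body P par m v y)"

end

theory Submission
  imports Defs
begin

text \<open>Rounding every variable of an assignment x down to the grid moves it by less than m.
  The gradient bound is a bound on the dual of the sup norm, so by the mean value theorem on
  the segment between the two points each utility function loses at most m \<delta>, and the
  rounded grid assignment has utility at least F(x) - |F| m \<delta>. Discrete DPOP is exact on
  the grid: by induction over the pseudo-tree, the UTIL message of a node bounds the utility
  collected in its subtree by any grid assignment extending the separator values, with equality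
  for the assignment chosen in the VALUE phase; at the root, the subtree utility is the total
  utility.\<close>

lemma linear_pair_abs_le:
  fixes D :: "real \<times> real \<Rightarrow> real"
  assumes "linear D"
  shows "\<bar>D v\<bar> \<le> max \<bar>fst v\<bar> \<bar>snd v\<bar> * (\<bar>D (1, 0)\<bar> + \<bar>D (0, 1)\<bar>)"
proof -
  interpret linear D by fact
  have "D v = D (fst v *\<^sub>R (1, 0) + snd v *\<^sub>R (0, 1))"
    by (cases v) simp
  also have "\<dots> = fst v * D (1, 0) + snd v * D (0, 1)"
    by (simp only: add scale real_scaleR_def)
  also have "\<bar>\<dots>\<bar> \<le> \<bar>fst v\<bar> * \<bar>D (1, 0)\<bar> + \<bar>snd v\<bar> * \<bar>D (0, 1)\<bar>"
    unfolding abs_mult [symmetric] by (rule abs_triangle_ineq)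
  also have "\<dots> \<le> max \<bar>fst v\<bar> \<bar>snd v\<bar> * \<bar>D (1, 0)\<bar> + max \<bar>fst v\<bar> \<bar>snd v\<bar> * \<bar>D (0, 1)\<bar>"
    by (intro add_mono mult_right_mono) auto
  finally show ?thesis
    by (simp add: distrib_left)
qed

lemma differentiable_bound_sup_norm:
  fixes f :: "real \<times> real \<Rightarrow> real"
  assumes "convex B" "x \<in> B" "z \<in> B"
    and deriv: "\<forall>v\<in>B. \<exists>D. (f has_derivative D) (at v within B) \<and> \<bar>D (1, 0)\<bar> + \<bar>D (0, 1)\<bar> \<le> \<delta>"
  shows "\<bar>f x - f z\<bar> \<le> max \<bar>fst x - fst z\<bar> \<bar>snd x - snd z\<bar> * \<delta>"
proof -
  obtain Df where Df: "\<And>v. v \<in> B \<Longrightarrow> (f has_derivative Df v) (at v within B)"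
    and Df_bound: "\<And>v. v \<in> B \<Longrightarrow> \<bar>Df v (1, 0)\<bar> + \<bar>Df v (0, 1)\<bar> \<le> \<delta>"
    using deriv by metis
  define p where "p t = z + t *\<^sub>R (x - z)" for t :: real
  have p_in: "p t \<in> B" if "0 \<le> t" "t \<le> 1" for t
  proof -
    have "p t = (1 - t) *\<^sub>R z + t *\<^sub>R x"
      by (simp add: p_def algebra_simps)
    then show ?thesis
      using convexD_alt[OF assms(1) assms(3) assms(2)] that by simp
  qed
  have p_deriv: "(p has_derivative (\<lambda>s. s *\<^sub>R (x - z))) (at t within {0..1})" for t
    unfolding p_def by (auto intro!: derivative_eq_intros)
  have "((\<lambda>t. f (p t)) has_derivative (\<lambda>s. Df (p t) (s *\<^sub>R (x - z)))) (at t within {0..1})"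
    if "0 \<le> t" "t \<le> 1" for t
    by (rule has_derivative_in_compose2[OF Df _ _ p_deriv]) (use p_in that in auto)
  from mvt_very_simple[OF _ this]
  obtain t where t: "t \<in> {0..1}" and "f (p 1) - f (p 0) = Df (p t) (1 *\<^sub>R (x - z))"
    by auto
  then have "f x - f z = Df (p t) (x - z)"
    by (simp add: p_def)
  also have "\<bar>\<dots>\<bar> \<le> max \<bar>fst x - fst z\<bar> \<bar>snd x - snd z\<bar> * (\<bar>Df (p t) (1, 0)\<bar> + \<bar>Df (p t) (0, 1)\<bar>)"
    using linear_pair_abs_le[OF has_derivative_linear[OF Df[OF p_in]], of t "x - z"] t by simp
  also have "\<dots> \<le> max \<bar>fst x - fst z\<bar> \<bar>snd x - snd z\<bar> * \<delta>"
    using Df_bound[OF p_in] t by (intro mult_left_mono) auto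
  finally show ?thesis .
qed

lemma grid_subset_interval: "m > 0 \<Longrightarrow> grid P m v \<subseteq> {lb P v..ub P v}"
  by (auto simp: grid_def)

lemma finite_grid:
  assumes "m > 0"
  shows "finite (grid P m v)"
proof -
  have "grid P m v \<subseteq> (\<lambda>n. lb P v + real n * m) ` {..nat \<lceil>(ub P v - lb P v) / m\<rceil>}"
  proof
    fix g assume "g \<in> grid P m v"
    then obtain n :: nat where g: "g = lb P v + real n * m" and "lb P v + real n * m \<le> ub P v"
      by (auto simp: grid_def)
    then have "real n \<le> (ub P v - lb P v) / m"
      using assms by (simp add: field_simps)
    then have "n \<le> nat \<lceil>(ub P v - lb P v) / m\<rceil>"
      by linarith
    then show "g \<in> (\<lambda>n. lb P v + real n * m) ` {..nat \<lceil>(ub P v - lb P v) / m\<rceil>}"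
      using g by auto
  qed
  then show ?thesis
    by (rule finite_subset) simp
qed

lemma grid_round_down:
  assumes "m > 0" "lb P v \<le> t" "t \<le> ub P v"
  shows "\<exists>g\<in>grid P m v. g \<le> t \<and> t - g < m"
proof -
  define n where "n = nat \<lfloor>(t - lb P v) / m\<rfloor>"
  have "real n \<le> (t - lb P v) / m" "(t - lb P v) / m < real n + 1"
    using assms by (simp_all add: n_def)
  then have "real n * m \<le> t - lb P v" "t - lb P v < real n * m + m"
    using assms(1) by (simp_all add: field_simps)
  moreover from this have "lb P v + real n * m \<in> grid P m v"
    using assms(3) by (auto simp: grid_def)
  ultimately show ?thesis
    by (intro bexI[of _ "lb P v + real n * m"]) auto
qed

lemma discretization_loss:
  fixes P :: "('v, 'f::finite) fdcop"
  assumes m: "m > 0"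
    and grad: "\<forall>k. \<forall>v\<in>fbox P k. \<exists>D. (util_fn P k has_derivative D) (at v within fbox P k)
                      \<and> \<bar>D (1, 0)\<bar> + \<bar>D (0, 1)\<bar> \<le> \<delta>"
    and x: "is_assignment P x"
  obtains z where "\<forall>v. z v \<in> grid P m v"
    and "total_utility P x - real CARD('f) * m * \<delta> \<le> total_utility P z"
proof -
  have "\<forall>v. \<exists>g\<in>grid P m v. g \<le> x v \<and> x v - g < m"
    using x unfolding is_assignment_def by (blast intro: grid_round_down[OF m])
  then obtain z where z_grid: "\<And>v. z v \<in> grid P m v"
    and z_le: "\<And>v. z v \<le> x v" and z_close: "\<And>v. x v - z v < m"
    by metis
  have loss: "util_fn P k (x (sa P k), x (sb P k)) - m * \<delta> \<le> util_fn P k (z (sa P k), z (sb P k))"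
    for k
  proof -
    have x_in: "(x (sa P k), x (sb P k)) \<in> fbox P k"
      using x by (auto simp: fbox_def is_assignment_def)
    moreover have "(z (sa P k), z (sb P k)) \<in> fbox P k"
      using grid_subset_interval[OF m] z_grid by (fastforce simp: fbox_def)
    moreover have "convex (fbox P k)"
      by (simp add: fbox_def convex_Times)
    ultimately have "\<bar>util_fn P k (x (sa P k), x (sb P k)) - util_fn P k (z (sa P k), z (sb P k))\<bar>
        \<le> max \<bar>x (sa P k) - z (sa P k)\<bar> \<bar>x (sb P k) - z (sb P k)\<bar> * \<delta>"
      using grad differentiable_bound_sup_norm by auto
    also have "\<dots> \<le> m * \<delta>"
    proof (rule mult_right_mono)
      show "max \<bar>x (sa P k) - z (sa P k)\<bar> \<bar>x (sb P k) - z (sb P k)\<bar> \<le> m"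
        using z_le z_close by (simp add: less_imp_le)
      show "0 \<le> \<delta>"
        using grad x_in by (meson abs_ge_zero add_nonneg_nonneg order_trans)
    qed
    finally show ?thesis
      by linarith
  qed
  have "total_utility P x - real CARD('f) * m * \<delta>
      = (\<Sum>k\<in>UNIV. util_fn P k (x (sa P k), x (sb P k)) - m * \<delta>)"
    by (simp add: total_utility_def sum_subtractf)
  also have "\<dots> \<le> total_utility P z"
    unfolding total_utility_def by (rule sum_mono) (rule loss)
  finally show ?thesis
    using that z_grid by blast
qed

lemma anc_parent: "par c = Some p \<Longrightarrow> anc par p c"
  by (auto simp: anc_def tree_rel_def)

lemma anc_trans: "anc par a b \<Longrightarrow> anc par b c \<Longrightarrow> anc par a c"
  unfolding anc_def by (rule trancl_trans)

lemma anc_parentD: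
  assumes "anc par a c" "par c = Some p"
  shows "a = p \<or> anc par a p"
  using assms(1) unfolding anc_def
  by (cases rule: tranclE) (use assms(2) in \<open>auto simp: tree_rel_def\<close>)

lemma not_anc_parentless: "par c = None \<Longrightarrow> \<not> anc par a c"
  unfolding anc_def by (auto elim: tranclE simp: tree_rel_def)

lemma anc_linear:
  assumes "anc par a w" "anc par b w"
  shows "a = b \<or> anc par a b \<or> anc par b a"
  using assms unfolding anc_def
proof (induction arbitrary: b rule: trancl_induct)
  case (base w)
  then show ?case
    using anc_parentD[of par b w a] by (auto simp: anc_def tree_rel_def)
next
  case (step u w)
  then have "b = u \<or> anc par b u"
    using anc_parentD[of par b w u] by (auto simp: anc_def tree_rel_def)
  then show ?case
    using step by (auto simp: anc_def)
qed

definition subtree :: "('v \<Rightarrow> 'v option) \<Rightarrow> 'v \<Rightarrow> 'v set" where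
  "subtree par c = insert c {w. anc par c w}"

lemma subtree_unfold: "subtree par c = insert c (\<Union>c'\<in>children par c. subtree par c')"
proof
  show "subtree par c \<subseteq> insert c (\<Union>c'\<in>children par c. subtree par c')"
  proof
    fix w assume "w \<in> subtree par c"
    then consider "w = c" | "(c, w) \<in> (tree_rel par)\<^sup>+"
      by (auto simp: subtree_def anc_def)
    then show "w \<in> insert c (\<Union>c'\<in>children par c. subtree par c')"
    proof cases
      case 2
      then show ?thesis
        by (cases rule: converse_tranclE) (auto simp: tree_rel_def children_def subtree_def anc_def)
    qed simp
  qed
  show "insert c (\<Union>c'\<in>children par c. subtree par c') \<subseteq> subtree par c"
    by (auto simp: subtree_def children_def intro: anc_parent anc_trans)
qed

definition subtree_util ::
    "('v, 'f::finite) fdcop \<Rightarrow> ('v \<Rightarrow> 'v option) \<Rightarrow> 'v \<Rightarrow> ('v \<Rightarrow> real) \<Rightarrow> real" where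
  "subtree_util P par c \<sigma> = (\<Sum>w\<in>subtree par c. local_util P par w \<sigma>)"

locale pseudo_tree =
  fixes P :: "('v::finite, 'f::finite) fdcop" and par :: "'v \<Rightarrow> 'v option" and r :: 'v
  assumes pseudo_tree: "is_pseudo_tree P par r"
begin

lemma anc_irrefl: "\<not> anc par v v"
  using pseudo_tree by (simp add: is_pseudo_tree_def)

lemma not_anc_root: "\<not> anc par a r"
proof -
  have "par r = None"
    using pseudo_tree by (simp add: is_pseudo_tree_def)
  then show ?thesis
    by (rule not_anc_parentless)
qed

lemma subtree_root: "subtree par r = UNIV"
proof -
  have "v \<noteq> r \<Longrightarrow> anc par r v" for v
    using pseudo_tree by (simp add: is_pseudo_tree_def)
  then show ?thesis
    by (auto simp: subtree_def)
qed

lemma handler_anc: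
  assumes "handler P par k = c"
  shows "(sa P k = c \<or> anc par (sa P k) c) \<and> (sb P k = c \<or> anc par (sb P k) c)"
proof -
  have "sa P k \<noteq> sb P k \<and> (anc par (sa P k) (sb P k) \<or> anc par (sb P k) (sa P k))"
    using pseudo_tree by (simp add: is_pseudo_tree_def)
  then show ?thesis
    using assms unfolding handler_def by (auto split: if_splits)
qed

lemma local_util_cong:
  assumes "\<And>w. w = c \<or> anc par w c \<Longrightarrow> \<sigma> w = \<tau> w"
  shows "local_util P par c \<sigma> = local_util P par c \<tau>"
  unfolding local_util_def
proof (rule sum.cong[OF refl])
  fix k assume "k \<in> {k. handler P par k = c}"
  then have "\<sigma> (sa P k) = \<tau> (sa P k)" "\<sigma> (sb P k) = \<tau> (sb P k)"
    using handler_anc assms by blast+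
  then show "util_fn P k (\<sigma> (sa P k), \<sigma> (sb P k)) = util_fn P k (\<tau> (sa P k), \<tau> (sb P k))"
    by simp
qed

lemma not_anc_sibling:
  assumes "c1 \<in> children par c" "c2 \<in> children par c"
  shows "\<not> anc par c1 c2"
proof
  assume "anc par c1 c2"
  then have "c1 = c \<or> anc par c1 c"
    using anc_parentD assms(2) by (simp add: children_def)
  moreover have "anc par c c1"
    using anc_parent assms(1) by (simp add: children_def)
  ultimately show False
    using anc_irrefl anc_trans by metis
qed

lemma parent_notin_subtree: "c' \<in> children par c \<Longrightarrow> c \<notin> subtree par c'"
  unfolding subtree_def children_def using anc_irrefl anc_parent anc_trans by fastforce

lemma subtree_children_disjoint:
  assumes "c1 \<in> children par c" "c2 \<in> children par c" "c1 \<noteq> c2"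
  shows "subtree par c1 \<inter> subtree par c2 = {}"
proof -
  have "\<not> anc par c1 c2" "\<not> anc par c2 c1"
    using not_anc_sibling assms by blast+
  then show ?thesis
    using assms(3) anc_linear[of par c1 _ c2] by (auto simp: subtree_def)
qed

lemma subtree_util_unfold:
  "subtree_util P par c \<sigma> = local_util P par c \<sigma> + (\<Sum>c'\<in>children par c. subtree_util P par c' \<sigma>)"
proof -
  have "subtree_util P par c \<sigma>
      = local_util P par c \<sigma> + (\<Sum>w\<in>(\<Union>c'\<in>children par c. subtree par c'). local_util P par w \<sigma>)"
    unfolding subtree_util_def by (subst subtree_unfold) (simp add: parent_notin_subtree)
  also have "(\<Sum>w\<in>(\<Union>c'\<in>children par c. subtree par c'). local_util P par w \<sigma>)
      = (\<Sum>c'\<in>children par c. subtree_util P par c' \<sigma>)"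
    unfolding subtree_util_def by (rule sum.UNION_disjoint) (auto dest: subtree_children_disjoint)
  finally show ?thesis .
qed

lemma card_subtree_pos: "0 < card (subtree par c)"
  by (simp add: subtree_def card_gt_0_iff)

lemma card_subtree_child: "c' \<in> children par c \<Longrightarrow> card (subtree par c') < card (subtree par c)"
  using subtree_unfold[of par c] parent_notin_subtree[of c' c] by (intro psubset_card_mono) auto

text \<open>The subtree of c has height below its cardinality, so that much fuel is enough.\<close>

lemma utilmsg_fuel_indep:
  "card (subtree par c) \<le> n \<Longrightarrow> card (subtree par c) \<le> n'
    \<Longrightarrow> utilmsg P par m n c \<sigma> = utilmsg P par m n' c \<sigma>"
proof (induction n arbitrary: n' c \<sigma>)
  case 0
  then show ?case
    using card_subtree_pos[of c] by simp
next
  case (Suc n)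
  obtain n'' where n': "n' = Suc n''"
    using Suc.prems(2) card_subtree_pos[of c] by (cases n') auto
  have "card (subtree par c') \<le> n" "card (subtree par c') \<le> n''" if "c' \<in> children par c" for c'
    using Suc.prems card_subtree_child[OF that] n' by simp_all
  then have "(\<Sum>c'\<in>children par c. utilmsg P par m n c' \<sigma>')
      = (\<Sum>c'\<in>children par c. utilmsg P par m n'' c' \<sigma>')" for \<sigma>'
    by (intro sum.cong refl Suc.IH)
  then show ?case
    by (simp only: n' utilmsg.simps)
qed

lemma subtree_util_le_utilmsg:
  assumes m: "m > 0"
  shows "card (subtree par c) \<le> n \<Longrightarrow> \<forall>w\<in>subtree par c. \<tau> w \<in> grid P m w
    \<Longrightarrow> \<forall>a. anc par a c \<longrightarrow> \<tau> a = \<sigma> a \<Longrightarrow> subtree_util P par c \<tau> \<le> utilmsg P par m n c \<sigma>"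
proof (induction n arbitrary: c \<sigma>)
  case 0
  then show ?case
    using card_subtree_pos[of c] by simp
next
  case (Suc n)
  define \<sigma>' where "\<sigma>' = \<sigma>(c := \<tau> c)"
  have "subtree_util P par c \<tau> = local_util P par c \<tau> + (\<Sum>c'\<in>children par c. subtree_util P par c' \<tau>)"
    by (rule subtree_util_unfold)
  also have "\<dots> \<le> local_util P par c \<sigma>' + (\<Sum>c'\<in>children par c. utilmsg P par m n c' \<sigma>')"
  proof (rule add_mono)
    have "local_util P par c \<tau> = local_util P par c \<sigma>'"
      using Suc.prems(3) anc_irrefl by (intro local_util_cong) (auto simp: \<sigma>'_def)
    then show "local_util P par c \<tau> \<le> local_util P par c \<sigma>'"
      by simp
    show "(\<Sum>c'\<in>children par c. subtree_util P par c' \<tau>) \<le> (\<Sum>c'\<in>children par c. utilmsg P par m n c' \<sigma>')"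
    proof (rule sum_mono)
      fix c' assume c': "c' \<in> children par c"
      show "subtree_util P par c' \<tau> \<le> utilmsg P par m n c' \<sigma>'"
      proof (rule Suc.IH)
        show "card (subtree par c') \<le> n"
          using Suc.prems(1) card_subtree_child[OF c'] by simp
        show "\<forall>w\<in>subtree par c'. \<tau> w \<in> grid P m w"
          using Suc.prems(2) subtree_unfold[of par c] c' by blast
        show "\<forall>a. anc par a c' \<longrightarrow> \<tau> a = \<sigma>' a"
          using Suc.prems(3) anc_parentD[of par _ c' c] c' by (auto simp: \<sigma>'_def children_def)
      qed
    qed
  qed
  also have "\<dots> \<le> utilmsg P par m (Suc n) c \<sigma>"
    unfolding \<sigma>'_def utilmsg.simps
    using Suc.prems(2) by (intro Max_ge finite_imageI finite_grid[OF m] imageI) (simp add: subtree_def)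
  finally show ?case .
qed

lemma card_subtree_le: "card (subtree par c) \<le> CARD('v)"
  by (rule card_mono) simp_all

lemma utilmsg_dpop_output:
  assumes out: "dpop_output P par m y" and m: "m > 0" and n: "card (subtree par c) \<le> n"
  shows "utilmsg P par m n c y = dpop_body P par m c y"
proof -
  obtain n' where n': "n = Suc n'"
    using n card_subtree_pos[of c] by (cases n) auto
  have "utilmsg P par m n' c' \<sigma> = utilmsg P par m CARD('v) c' \<sigma>" if "c' \<in> children par c" for c' \<sigma>
    using n n' card_subtree_child[OF that] by (intro utilmsg_fuel_indep card_subtree_le) simp
  then have "utilmsg P par m n c y = Max ((\<lambda>d. dpop_body P par m c (y(c := d))) ` grid P m c)"
    by (simp add: n' dpop_body_def)
  also have "\<dots> = dpop_body P par m c y"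
  proof (rule Max_eqI)
    show "finite ((\<lambda>d. dpop_body P par m c (y(c := d))) ` grid P m c)"
      by (intro finite_imageI finite_grid[OF m])
    show "b \<le> dpop_body P par m c y" if "b \<in> (\<lambda>d. dpop_body P par m c (y(c := d))) ` grid P m c" for b
      using that out by (auto simp: dpop_output_def)
    have "y c \<in> grid P m c"
      using out by (simp add: dpop_output_def)
    then show "dpop_body P par m c y \<in> (\<lambda>d. dpop_body P par m c (y(c := d))) ` grid P m c"
      by (metis fun_upd_triv image_eqI)
  qed
  finally show ?thesis .
qed

lemma subtree_util_dpop_output:
  assumes out: "dpop_output P par m y" and m: "m > 0"
  shows "subtree_util P par c y = dpop_body P par m c y"
proof (induction "card (subtree par c)" arbitrary: c rule: less_induct)
  case less
  have "subtree_util P par c y = local_util P par c y + (\<Sum>c'\<in>children par c. subtree_util P par c' y)"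
    by (rule subtree_util_unfold)
  also have "\<dots> = local_util P par c y + (\<Sum>c'\<in>children par c. utilmsg P par m CARD('v) c' y)"
    using less card_subtree_child utilmsg_dpop_output[OF out m card_subtree_le] by simp
  also have "\<dots> = dpop_body P par m c y"
    by (simp add: dpop_body_def)
  finally show ?case .
qed

lemma total_utility_eq_subtree_util_root: "total_utility P \<sigma> = subtree_util P par r \<sigma>"
  unfolding total_utility_def subtree_util_def subtree_root local_util_def
  using sum.group[of UNIV UNIV "handler P par" "\<lambda>k. util_fn P k (\<sigma> (sa P k), \<sigma> (sb P k))"] by simp

lemma dpop_output_optimal_on_grid:
  assumes out: "dpop_output P par m y" and m: "m > 0" and z: "\<forall>v. z v \<in> grid P m v"
  shows "total_utility P z \<le> total_utility P y"
proof -
  have "subtree_util P par r z \<le> utilmsg P par m CARD('v) r y"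
    using z not_anc_root by (intro subtree_util_le_utilmsg[OF m card_subtree_le]) simp_all
  also have "\<dots> = subtree_util P par r y"
    using utilmsg_dpop_output[OF out m card_subtree_le] subtree_util_dpop_output[OF out m] by simp
  finally show ?thesis
    by (simp add: total_utility_eq_subtree_util_root)
qed

end

theorem theorem1:
  fixes P :: "('v::finite, 'f::finite) fdcop"
    and par :: "'v \<Rightarrow> 'v option" and r :: 'v
    and m \<delta> :: real and y :: "'v \<Rightarrow> real"
  assumes dom: "\<forall>v. lb P v \<le> ub P v"
    and m_pos: "m > 0"
    and pt: "is_pseudo_tree P par r"
    and grad: "\<forall>k. \<forall>v\<in>fbox P k. \<exists>D. (util_fn P k has_derivative D) (at v within fbox P k)
                      \<and> \<bar>D (1, 0)\<bar> + \<bar>D (0, 1)\<bar> \<le> \<delta>"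
    and out: "dpop_output P par m y"
  shows "\<forall>x. is_assignment P x \<longrightarrow>
           total_utility P y \<ge> total_utility P x - real CARD('f) * m * \<delta>"
proof (intro allI impI)
  interpret pseudo_tree P par r
    by (rule pseudo_tree.intro) (rule pt)
  fix x assume "is_assignment P x"
  then obtain z where "\<forall>v. z v \<in> grid P m v"
    and "total_utility P x - real CARD('f) * m * \<delta> \<le> total_utility P z"
    using discretization_loss[OF m_pos grad] by blast
  moreover from this have "total_utility P z \<le> total_utility P y"
    using dpop_output_optimal_on_grid[OF out m_pos] by blast
  ultimately show "total_utility P y \<ge> total_utility P x - real CARD('f) * m * \<delta>"
    by linarith
qed

end
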